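(* In the Tempered Gibbs Sampler setting below, let $b=\sup_{i,\boldsymbol{x}} f(x_i|\boldsymbol{x}_{-i})/g(x_i|\boldsymbol{x}_{-i})$. Let $\mathbf{X}\sim fZ$ and $W=w(\mathbf{X})$. Then $$\mathrm{Var}(W)\le b-1\qquad\text{and}\qquad \mathrm{var}(h,SIS)\le b\,\mathrm{var}_f(h),$$ where $\mathrm{var}_f(h)=\mathbb{E}_f[h^2]-\mathbb{E}_f[h]^2$.
   Context: Setting: $f$ is a probability density on $\mathcal{X}=\mathcal{X}_1\times\dots\times\mathcal{X}_d$; for each $i,\boldsymbol{x}_{-i}$, $g(\cdot|\boldsymbol{x}_{-i})$ is a probability density on $\mathcal{X}_i$ absolutely continuous w.r.t. the full conditional $f(\cdot|\boldsymbol{x}_{-i})$. Let $p_i(\boldsymbol{x})=g(x_i|\boldsymbol{x}_{-i})/f(x_i|\boldsymbol{x}_{-i})$, $Z(\boldsymbol{x})=\frac1d\sum_i p_i(\boldsymbol{x})$, $w=1/Z$; $fZ$ is a probability density on $\mathcal{X}$. For $h\in L^1(\mathcal{X},f)$, the self-normalised importance sampling estimator is $\hat h_n^{SIS}=\sum_{i=1}^n w(\boldsymbol{y}^{(i)})h(\boldsymbol{y}^{(i)})/\sum_{i=1}^n w(\boldsymbol{y}^{(i)})$ with $\boldsymbol{y}^{(i)}$ i.i.d. from $fZ$, and $\mathrm{var}(h,SIS)=\lim_{n\to\infty}n\,\mathrm{var}(\hat h_n^{SIS})$, which equals $\mathbb{E}_f[\bar h^2 w]$ with $\bar h=h-\mathbb{E}_f[h]$.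 *)

theory Defs
  imports "HOL-Probability.Probability"
begin

text \<open>Coordinates are indexed by i < d;
  coordinate space i is the measure space M i (all on a common carrier type 'a);
  the state space is the product measure PiM {..<d} M; points are x :: nat => 'a.
  f is a probability density w.r.t. the product measure;
  g i x t is the proposal density g(t | x_{-i}) on M i (it depends on x only through x_{-i}).\<close>

definition tgs_space :: "nat \<Rightarrow> (nat \<Rightarrow> 'a measure) \<Rightarrow> (nat \<Rightarrow> 'a) measure" where
  "tgs_space d M = PiM {..<d} M"

definition marg :: "(nat \<Rightarrow> 'a measure) \<Rightarrow> ((nat \<Rightarrow> 'a) \<Rightarrow> real) \<Rightarrow> nat \<Rightarrow> (nat \<Rightarrow> 'a) \<Rightarrow> ennreal" where
  "marg M f i x = (\<integral>\<^sup>+ t. ennreal (f (x(i := t))) \<partial>(M i))"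

text \<open>Full conditional density f(x_i | x_{-i}) = f(x) / marginal(x_{-i})
  (set to 0 where the marginal is 0 or infinite).\<close>
definition fcond :: "(nat \<Rightarrow> 'a measure) \<Rightarrow> ((nat \<Rightarrow> 'a) \<Rightarrow> real) \<Rightarrow> nat \<Rightarrow> (nat \<Rightarrow> 'a) \<Rightarrow> real" where
  "fcond M f i x = f x / enn2real (marg M f i x)"

definition pratio :: "(nat \<Rightarrow> 'a measure) \<Rightarrow> ((nat \<Rightarrow> 'a) \<Rightarrow> real) \<Rightarrow> (nat \<Rightarrow> (nat \<Rightarrow> 'a) \<Rightarrow> 'a \<Rightarrow> real)
    \<Rightarrow> nat \<Rightarrow> (nat \<Rightarrow> 'a) \<Rightarrow> real" where
  "pratio M f g i x = g i x (x i) / fcond M f i x"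

definition Zfun :: "nat \<Rightarrow> (nat \<Rightarrow> 'a measure) \<Rightarrow> ((nat \<Rightarrow> 'a) \<Rightarrow> real) \<Rightarrow> (nat \<Rightarrow> (nat \<Rightarrow> 'a) \<Rightarrow> 'a \<Rightarrow> real)
    \<Rightarrow> (nat \<Rightarrow> 'a) \<Rightarrow> real" where
  "Zfun d M f g x = (\<Sum>i<d. pratio M f g i x) / real d"

definition wfun :: "nat \<Rightarrow> (nat \<Rightarrow> 'a measure) \<Rightarrow> ((nat \<Rightarrow> 'a) \<Rightarrow> real) \<Rightarrow> (nat \<Rightarrow> (nat \<Rightarrow> 'a) \<Rightarrow> 'a \<Rightarrow> real)
    \<Rightarrow> (nat \<Rightarrow> 'a) \<Rightarrow> real" where
  "wfun d M f g x = 1 / Zfun d M f g x"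

text \<open>b = sup_{i,x} f(x_i|x_{-i}) / g(x_i|x_{-i}), in the extended reals
  (a ratio c/0 with c > 0 is +infinity, 0/0 = 0).\<close>
definition bconst :: "nat \<Rightarrow> (nat \<Rightarrow> 'a measure) \<Rightarrow> ((nat \<Rightarrow> 'a) \<Rightarrow> real) \<Rightarrow> (nat \<Rightarrow> (nat \<Rightarrow> 'a) \<Rightarrow> 'a \<Rightarrow> real)
    \<Rightarrow> ereal" where
  "bconst d M f g = (SUP ix \<in> {..<d} \<times> space (tgs_space d M).
       ereal (fcond M f (fst ix) (snd ix)) / ereal (g (fst ix) (snd ix) (snd ix (fst ix))))"

definition target :: "nat \<Rightarrow> (nat \<Rightarrow> 'a measure) \<Rightarrow> ((nat \<Rightarrow> 'a) \<Rightarrow> real) \<Rightarrow> (nat \<Rightarrow> 'a) measure" where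
  "target d M f = density (tgs_space d M) (\<lambda>x. ennreal (f x))"

definition tgs_dist :: "nat \<Rightarrow> (nat \<Rightarrow> 'a measure) \<Rightarrow> ((nat \<Rightarrow> 'a) \<Rightarrow> real) \<Rightarrow> (nat \<Rightarrow> (nat \<Rightarrow> 'a) \<Rightarrow> 'a \<Rightarrow> real)
    \<Rightarrow> (nat \<Rightarrow> 'a) measure" where
  "tgs_dist d M f g = density (tgs_space d M) (\<lambda>x. ennreal (f x * Zfun d M f g x))"

text \<open>var_f(h) = E_f[h^2] - E_f[h]^2 (extended real; +infinity if E_f[h^2] is infinite).\<close>
definition var_f :: "nat \<Rightarrow> (nat \<Rightarrow> 'a measure) \<Rightarrow> ((nat \<Rightarrow> 'a) \<Rightarrow> real) \<Rightarrow> ((nat \<Rightarrow> 'a) \<Rightarrow> real) \<Rightarrow> ereal" where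
  "var_f d M f h = enn2ereal (\<integral>\<^sup>+ x. ennreal ((h x)\<^sup>2) \<partial>(target d M f))
      - ereal ((\<integral> x. h x \<partial>(target d M f))\<^sup>2)"

text \<open>Asymptotic variance of the self-normalised IS estimator, var(h,SIS) = E_f[hbar^2 w],
  with hbar = h - E_f[h] (identity stated in the setting).\<close>
definition var_SIS :: "nat \<Rightarrow> (nat \<Rightarrow> 'a measure) \<Rightarrow> ((nat \<Rightarrow> 'a) \<Rightarrow> real) \<Rightarrow> (nat \<Rightarrow> (nat \<Rightarrow> 'a) \<Rightarrow> 'a \<Rightarrow> real)
    \<Rightarrow> ((nat \<Rightarrow> 'a) \<Rightarrow> real) \<Rightarrow> ereal" where
  "var_SIS d M f g h = enn2ereal (\<integral>\<^sup>+ x. ennreal ((h x - (\<integral> y. h y \<partial>(target d M f)))\<^sup>2 * wfun d M f g x)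
      \<partial>(target d M f))"

definition var_W :: "nat \<Rightarrow> (nat \<Rightarrow> 'a measure) \<Rightarrow> ((nat \<Rightarrow> 'a) \<Rightarrow> real) \<Rightarrow> (nat \<Rightarrow> (nat \<Rightarrow> 'a) \<Rightarrow> 'a \<Rightarrow> real)
    \<Rightarrow> ereal" where
  "var_W d M f g = enn2ereal (\<integral>\<^sup>+ x. ennreal ((wfun d M f g x - (\<integral> y. wfun d M f g y \<partial>(tgs_dist d M f g)))\<^sup>2)
      \<partial>(tgs_dist d M f g))"

end

theory Submission
  imports Defs
begin

text \<open>At f-almost every point all full conditionals are positive, and there every ratio
  p_i = g/f(x_i | x_{-i}) is at least 1/b; hence Z \<ge> 1/b and w \<le> b. Integrating
  (h - E_f h)^2 w \<le> b (h - E_f h)^2 against f gives the SIS bound. For W one has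
  E_{fZ} w = E_f 1 = 1 and, since Z w = 1,
  E_{fZ} (w - 1)^2 = E_f w - 2 + E_f Z \<le> b - 2 + 1; the bound E_f p_i \<le> 1 follows by
  integrating out x_i first, where the marginal of x_{-i} cancels and g integrates to 1.\<close>

lemma marg_fun_upd [simp]: "marg M f i (x(i := t)) = marg M f i x"
  unfolding marg_def by simp

lemma fun_upd_in_space_PiM:
  assumes "i \<in> I" "y \<in> space (PiM (I - {i}) M)" "t \<in> space (M i)"
  shows "y(i := t) \<in> space (PiM I M)"
  using assms PiE_fun_upd[of t "\<lambda>j. space (M j)" i y "I - {i}"]
  by (simp add: space_PiM insert_absorb)

lemma nn_integral_PiM_split_coordinate:
  assumes I: "finite I" "i \<in> I" and sf: "\<And>j. j \<in> I \<Longrightarrow> sigma_finite_measure (M j)"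
    and F: "F \<in> borel_measurable (PiM I M)"
  shows "(\<integral>\<^sup>+ x. F x \<partial>PiM I M) = (\<integral>\<^sup>+ y. (\<integral>\<^sup>+ t. F (y(i := t)) \<partial>M i) \<partial>PiM (I - {i}) M)"
proof -
  \<comment> \<open>The product measure only sees the factors indexed by I, so the others may be replaced
    by a sigma-finite one.\<close>
  define M' where "M' j = (if j \<in> I then M j else M i)" for j
  interpret product_sigma_finite M'
    unfolding product_sigma_finite_def M'_def using I sf by auto
  have PiM_M': "PiM J M' = PiM J M" if "J \<subseteq> I" for J
    using that by (intro PiM_cong) (auto simp: M'_def)
  have "insert i (I - {i}) = I" using I by auto
  with product_nn_integral_insert[of "I - {i}" i F] I F show ?thesis
    by (simp add: PiM_M' M'_def)
qed

lemma ennreal_f_mult_pratio_le: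
  assumes "0 \<le> g i x (x i)"
  shows "ennreal (f x * pratio M f g i x) \<le> marg M f i x * ennreal (g i x (x i))"
proof -
  have "f x * pratio M f g i x \<le> enn2real (marg M f i x) * g i x (x i)"
    using assms by (cases "f x = 0 \<or> enn2real (marg M f i x) = 0") (auto simp: pratio_def fcond_def)
  then have "ennreal (f x * pratio M f g i x) \<le> ennreal (enn2real (marg M f i x)) * ennreal (g i x (x i))"
    using assms by (simp add: ennreal_mult[symmetric] ennreal_leI)
  also have "\<dots> \<le> marg M f i x * ennreal (g i x (x i))"
    by (intro mult_right_mono) (auto simp: ennreal_enn2real_if)
  finally show ?thesis .
qed

context
  fixes I :: "nat set" and M :: "nat \<Rightarrow> 'a measure" and f :: "(nat \<Rightarrow> 'a) \<Rightarrow> real" and i :: nat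
  assumes I: "finite I" "i \<in> I"
    and sf: "\<And>j. j \<in> I \<Longrightarrow> sigma_finite_measure (M j)"
    and f_meas [measurable]: "f \<in> borel_measurable (PiM I M)"
begin

lemma measurable_marg:
  assumes "insert i J = I"
  shows "marg M f i \<in> borel_measurable (PiM J M)"
proof -
  interpret sigma_finite_measure "M i" using I sf by simp
  have "(\<lambda>p. (fst p)(i := snd p)) \<in> measurable (PiM J M \<Otimes>\<^sub>M M i) (PiM I M)"
    by (rule measurable_fun_upd) (use assms in auto)
  then have "case_prod (\<lambda>x t. ennreal (f (x(i := t)))) \<in> borel_measurable (PiM J M \<Otimes>\<^sub>M M i)"
    unfolding case_prod_beta' by measurable
  from borel_measurable_nn_integral[OF this] show ?thesis
    unfolding marg_def by simp
qed

lemma nn_integral_marg: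
  "(\<integral>\<^sup>+ y. marg M f i y \<partial>PiM (I - {i}) M) = (\<integral>\<^sup>+ x. ennreal (f x) \<partial>PiM I M)"
  using nn_integral_PiM_split_coordinate[OF I sf, where F="\<lambda>x. ennreal (f x)"]
  by (simp add: marg_def)

lemma AE_marg_pos_finite:
  assumes fin: "(\<integral>\<^sup>+ x. ennreal (f x) \<partial>PiM I M) \<noteq> \<infinity>"
  shows "AE x in PiM I M. 0 < f x \<longrightarrow> 0 < marg M f i x \<and> marg M f i x < \<infinity>"
proof -
  define bad where "bad x \<longleftrightarrow> marg M f i x = 0 \<or> marg M f i x = \<infinity>" for x
  define F where "F x = (if bad x then ennreal (f x) else 0)" for x
  have [measurable]: "marg M f i \<in> borel_measurable (PiM I M)"
    "marg M f i \<in> borel_measurable (PiM (I - {i}) M)"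
    by (rule measurable_marg; use I in auto)+
  have F_meas: "F \<in> borel_measurable (PiM I M)"
    unfolding F_def bad_def by measurable
  have marg_fin: "AE y in PiM (I - {i}) M. marg M f i y \<noteq> \<infinity>"
    by (rule nn_integral_PInf_AE) (use fin in \<open>simp_all add: nn_integral_marg\<close>)
  \<comment> \<open>Integrating out coordinate i, F becomes marg on the bad set, which is 0 a.e.\<close>
  have "(\<integral>\<^sup>+ x. F x \<partial>PiM I M) = (\<integral>\<^sup>+ y. (\<integral>\<^sup>+ t. F (y(i := t)) \<partial>M i) \<partial>PiM (I - {i}) M)"
    by (rule nn_integral_PiM_split_coordinate[OF I sf F_meas])
  also have "\<dots> = (\<integral>\<^sup>+ y. (if bad y then marg M f i y else 0) \<partial>PiM (I - {i}) M)"
    by (intro nn_integral_cong) (simp add: F_def bad_def marg_def)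
  also have "\<dots> = 0"
    using marg_fin by (subst nn_integral_0_iff_AE) (auto simp: bad_def elim: AE_mp)
  finally have "AE x in PiM I M. F x = 0"
    using nn_integral_0_iff_AE[OF F_meas] by simp
  then show ?thesis
    by eventually_elim (auto simp: F_def bad_def less_top zero_less_iff_neq_zero split: if_splits)
qed

lemma nn_integral_f_mult_pratio_le:
  fixes g :: "nat \<Rightarrow> (nat \<Rightarrow> 'a) \<Rightarrow> 'a \<Rightarrow> real"
  assumes g_joint_meas: "(\<lambda>x. g i x (x i)) \<in> borel_measurable (PiM I M)"
    and g_meas: "\<And>x. x \<in> space (PiM I M) \<Longrightarrow> g i x \<in> borel_measurable (M i)"
    and g_nonneg: "\<And>x t. x \<in> space (PiM I M) \<Longrightarrow> t \<in> space (M i) \<Longrightarrow> 0 \<le> g i x t"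
    and g_prob: "\<And>x. x \<in> space (PiM I M) \<Longrightarrow> (\<integral>\<^sup>+ t. ennreal (g i x t) \<partial>M i) = 1"
    and g_dep: "\<And>x s. x \<in> space (PiM I M) \<Longrightarrow> s \<in> space (M i) \<Longrightarrow> g i (x(i := s)) = g i x"
  shows "(\<integral>\<^sup>+ x. ennreal (f x * pratio M f g i x) \<partial>PiM I M) \<le> (\<integral>\<^sup>+ x. ennreal (f x) \<partial>PiM I M)"
proof -
  have [measurable]: "marg M f i \<in> borel_measurable (PiM I M)"
    by (rule measurable_marg) (use I in auto)
  have "(\<integral>\<^sup>+ x. ennreal (f x * pratio M f g i x) \<partial>PiM I M)
      \<le> (\<integral>\<^sup>+ x. marg M f i x * ennreal (g i x (x i)) \<partial>PiM I M)"
  proof (intro nn_integral_mono)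
    fix x assume "x \<in> space (PiM I M)"
    then show "ennreal (f x * pratio M f g i x) \<le> marg M f i x * ennreal (g i x (x i))"
      using I g_nonneg by (intro ennreal_f_mult_pratio_le) (auto simp: space_PiM)
  qed
  also have "\<dots> = (\<integral>\<^sup>+ y. (\<integral>\<^sup>+ t. marg M f i y * ennreal (g i (y(i := t)) t) \<partial>M i) \<partial>PiM (I - {i}) M)"
    by (subst nn_integral_PiM_split_coordinate[OF I sf]) (use g_joint_meas in simp_all)
  also have "\<dots> \<le> (\<integral>\<^sup>+ y. marg M f i y \<partial>PiM (I - {i}) M)"
  proof (intro nn_integral_mono)
    fix y assume y: "y \<in> space (PiM (I - {i}) M)"
    show "(\<integral>\<^sup>+ t. marg M f i y * ennreal (g i (y(i := t)) t) \<partial>M i) \<le> marg M f i y"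
    proof (cases "space (M i) = {}")
      case False
      then obtain t0 where t0: "t0 \<in> space (M i)" by blast
      have y0: "y(i := t0) \<in> space (PiM I M)"
        by (rule fun_upd_in_space_PiM[OF I(2) y t0])
      have "(\<integral>\<^sup>+ t. marg M f i y * ennreal (g i (y(i := t)) t) \<partial>M i)
          = (\<integral>\<^sup>+ t. marg M f i y * ennreal (g i (y(i := t0)) t) \<partial>M i)"
        using g_dep[OF y0] by (intro nn_integral_cong) simp
      also have "\<dots> = marg M f i y"
        using g_meas[OF y0] g_prob[OF y0] by (subst nn_integral_cmult) simp_all
      finally show ?thesis by simp
    qed (simp add: nn_integral_empty)
  qed
  also have "\<dots> = (\<integral>\<^sup>+ x. ennreal (f x) \<partial>PiM I M)"
    by (rule nn_integral_marg)
  finally show ?thesis .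
qed

end

lemma (in prob_space) nn_integral_variance:
  fixes h :: "'a \<Rightarrow> real"
  assumes h: "integrable M h"
  shows "enn2ereal (\<integral>\<^sup>+ x. ennreal ((h x - expectation h)\<^sup>2) \<partial>M)
       = enn2ereal (\<integral>\<^sup>+ x. ennreal ((h x)\<^sup>2) \<partial>M) - ereal ((expectation h)\<^sup>2)"
proof -
  define c where "c = expectation h"
  have [measurable]: "h \<in> borel_measurable M"
    using h by (rule borel_measurable_integrable)
  have square_eq: "(h x)\<^sup>2 = (h x - c)\<^sup>2 + 2 * c * h x - c\<^sup>2" for x
    by (simp add: power2_diff)
  have "integrable M (\<lambda>x. (h x)\<^sup>2) \<longleftrightarrow> integrable M (\<lambda>x. (h x - c)\<^sup>2)"
  proof
    assume "integrable M (\<lambda>x. (h x - c)\<^sup>2)"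
    then show "integrable M (\<lambda>x. (h x)\<^sup>2)"
      using h unfolding square_eq by auto
  qed (use h in \<open>simp add: power2_diff\<close>)
  then consider "integrable M (\<lambda>x. (h x)\<^sup>2)" "integrable M (\<lambda>x. (h x - c)\<^sup>2)"
    | "\<not> integrable M (\<lambda>x. (h x)\<^sup>2)" "\<not> integrable M (\<lambda>x. (h x - c)\<^sup>2)"
    by blast
  then show ?thesis
  proof cases
    case 1
    then have "variance h = expectation (\<lambda>x. (h x)\<^sup>2) - c\<^sup>2"
      using variance_eq[OF h] by (simp add: c_def)
    moreover have "0 \<le> variance h"
      by (rule variance_positive)
    ultimately show ?thesis
      using 1 by (simp add: nn_integral_eq_integral c_def[symmetric])
  next
    case 2
    then show ?thesis
      by (simp add: nn_integral_nonneg_infinite c_def[symmetric])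
  qed
qed

lemma weighted_deviation_le:
  fixes F Z w B :: real
  assumes "0 \<le> F" "Z * w = 1" "w \<le> B"
  shows "F * Z * (w - 1)\<^sup>2 + 2 * F \<le> B * F + F * Z"
proof -
  have "F * Z * (w - 1)\<^sup>2 + 2 * F = F * (Z * w * w - 2 * (Z * w) + Z + 2)"
    by (simp add: power2_eq_square algebra_simps)
  also have "\<dots> = F * (w + Z)"
    using assms(2) by simp
  also have "\<dots> \<le> F * (B + Z)"
    using assms(1,3) by (intro mult_left_mono) simp_all
  finally show ?thesis
    by (simp add: algebra_simps)
qed

locale tgs_setting =
  fixes d :: nat and M :: "nat \<Rightarrow> 'a measure"
    and f :: "(nat \<Rightarrow> 'a) \<Rightarrow> real"
    and g :: "nat \<Rightarrow> (nat \<Rightarrow> 'a) \<Rightarrow> 'a \<Rightarrow> real"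
  assumes d_pos: "d \<ge> 1"
    and sf: "\<And>i. i < d \<Longrightarrow> sigma_finite_measure (M i)"
    and f_meas [measurable]: "f \<in> borel_measurable (tgs_space d M)"
    and f_nonneg: "\<And>x. x \<in> space (tgs_space d M) \<Longrightarrow> 0 \<le> f x"
    and f_prob: "(\<integral>\<^sup>+ x. ennreal (f x) \<partial>(tgs_space d M)) = 1"
    and g_meas: "\<And>i x. i < d \<Longrightarrow> x \<in> space (tgs_space d M) \<Longrightarrow> g i x \<in> borel_measurable (M i)"
    and g_nonneg: "\<And>i x t. i < d \<Longrightarrow> x \<in> space (tgs_space d M) \<Longrightarrow> t \<in> space (M i) \<Longrightarrow> 0 \<le> g i x t"
    and g_prob: "\<And>i x. i < d \<Longrightarrow> x \<in> space (tgs_space d M) \<Longrightarrow> (\<integral>\<^sup>+ t. ennreal (g i x t) \<partial>(M i)) = 1"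
    and g_dep: "\<And>i x s. i < d \<Longrightarrow> x \<in> space (tgs_space d M) \<Longrightarrow> s \<in> space (M i) \<Longrightarrow>
                 g i (x(i := s)) = g i x"
    and g_joint_meas: "\<And>i. i < d \<Longrightarrow> (\<lambda>x. g i x (x i)) \<in> borel_measurable (tgs_space d M)"
begin

lemma measurable_marg_tgs [measurable]: "i < d \<Longrightarrow> marg M f i \<in> borel_measurable (tgs_space d M)"
  unfolding tgs_space_def
  by (rule measurable_marg[where I="{..<d}"]) (use sf f_meas in \<open>auto simp: tgs_space_def\<close>)

lemma measurable_pratio [measurable]: "i < d \<Longrightarrow> pratio M f g i \<in> borel_measurable (tgs_space d M)"
  unfolding pratio_def fcond_def using g_joint_meas by measurable

lemma measurable_Zfun [measurable]: "Zfun d M f g \<in> borel_measurable (tgs_space d M)"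
  unfolding Zfun_def by measurable

lemma measurable_wfun [measurable]: "wfun d M f g \<in> borel_measurable (tgs_space d M)"
  unfolding wfun_def by measurable

lemma g_diag_nonneg: "i < d \<Longrightarrow> x \<in> space (tgs_space d M) \<Longrightarrow> 0 \<le> g i x (x i)"
  using g_nonneg by (auto simp: tgs_space_def space_PiM)

lemma pratio_nonneg: "i < d \<Longrightarrow> x \<in> space (tgs_space d M) \<Longrightarrow> 0 \<le> pratio M f g i x"
  using g_diag_nonneg f_nonneg by (simp add: pratio_def fcond_def)

lemma Zfun_nonneg: "x \<in> space (tgs_space d M) \<Longrightarrow> 0 \<le> Zfun d M f g x"
  unfolding Zfun_def using pratio_nonneg by (intro divide_nonneg_nonneg sum_nonneg) auto

lemma nn_integral_f_mult_pratio_le_1: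
  assumes i: "i < d"
  shows "(\<integral>\<^sup>+ x. ennreal (f x * pratio M f g i x) \<partial>tgs_space d M) \<le> 1"
  using nn_integral_f_mult_pratio_le[of "{..<d}" i M f g] i sf
    f_meas g_joint_meas g_meas g_nonneg g_prob g_dep f_prob
  by (simp add: tgs_space_def)

lemma nn_integral_f_mult_Zfun_le_1: "(\<integral>\<^sup>+ x. ennreal (f x * Zfun d M f g x) \<partial>tgs_space d M) \<le> 1"
proof -
  have "(\<integral>\<^sup>+ x. ennreal (f x * Zfun d M f g x) \<partial>tgs_space d M)
      = (\<integral>\<^sup>+ x. ennreal (1 / real d) * (\<Sum>i<d. ennreal (f x * pratio M f g i x)) \<partial>tgs_space d M)"
  proof (intro nn_integral_cong)
    fix x assume x: "x \<in> space (tgs_space d M)"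
    then have nonneg: "\<And>i. i \<in> {..<d} \<Longrightarrow> 0 \<le> f x * pratio M f g i x"
      using f_nonneg pratio_nonneg by simp
    have "f x * Zfun d M f g x = (1 / real d) * (\<Sum>i<d. f x * pratio M f g i x)"
      by (simp add: Zfun_def sum_distrib_left sum_divide_distrib)
    also have "ennreal \<dots> = ennreal (1 / real d) * ennreal (\<Sum>i<d. f x * pratio M f g i x)"
      using nonneg by (intro ennreal_mult) (auto intro: sum_nonneg)
    also have "\<dots> = ennreal (1 / real d) * (\<Sum>i<d. ennreal (f x * pratio M f g i x))"
      using nonneg by (subst sum_ennreal) auto
    finally show "ennreal (f x * Zfun d M f g x)
        = ennreal (1 / real d) * (\<Sum>i<d. ennreal (f x * pratio M f g i x))" .
  qed
  also have "\<dots> = ennreal (1 / real d) * (\<Sum>i<d. \<integral>\<^sup>+ x. ennreal (f x * pratio M f g i x) \<partial>tgs_space d M)"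
    by (subst nn_integral_cmult) (measurable, subst nn_integral_sum, auto)
  also have "\<dots> \<le> ennreal (1 / real d) * (\<Sum>i<d. 1)"
    by (intro mult_left_mono sum_mono nn_integral_f_mult_pratio_le_1) auto
  also have "\<dots> = 1"
    using d_pos by (simp add: ennreal_of_nat_eq_real_of_nat ennreal_mult[symmetric])
  finally show ?thesis .
qed

lemma prob_space_target: "prob_space (target d M f)"
proof
  have "emeasure (target d M f) (space (target d M f))
      = (\<integral>\<^sup>+ x. ennreal (f x) * indicator (space (tgs_space d M)) x \<partial>tgs_space d M)"
    by (simp add: target_def emeasure_density)
  also have "\<dots> = 1"
    using f_prob by (simp cong: nn_integral_cong)
  finally show "emeasure (target d M f) (space (target d M f)) = 1" .
qed

definition regular_point :: "(nat \<Rightarrow> 'a) \<Rightarrow> bool" where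
  "regular_point x \<longleftrightarrow> x \<in> space (tgs_space d M) \<and> (\<forall>i<d. 0 < fcond M f i x)"

lemma AE_pos_imp_regular_point: "AE x in tgs_space d M. 0 < f x \<longrightarrow> regular_point x"
proof -
  have "AE x in tgs_space d M. \<forall>i\<in>{..<d}. 0 < f x \<longrightarrow> 0 < marg M f i x \<and> marg M f i x < \<infinity>"
    unfolding tgs_space_def
    by (intro AE_finite_allI AE_marg_pos_finite) (use sf f_meas f_prob in \<open>auto simp: tgs_space_def\<close>)
  with AE_space show ?thesis
    by eventually_elim (auto simp: regular_point_def fcond_def enn2real_positive_iff)
qed

lemma AE_regular_point: "AE x in target d M f. regular_point x"
  unfolding target_def using AE_pos_imp_regular_point by (subst AE_density) auto

lemma ex_regular_point: "\<exists>x. regular_point x"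
  using prob_space.ae_filter_bot[OF prob_space_target] eventually_happens[OF AE_regular_point]
  by blast

lemma fcond_divide_g_le_bconst:
  "i < d \<Longrightarrow> x \<in> space (tgs_space d M) \<Longrightarrow> ereal (fcond M f i x) / ereal (g i x (x i)) \<le> bconst d M f g"
  unfolding bconst_def by (rule SUP_upper2[of "(i, x)"]) auto

lemma bconst_pos: "0 < bconst d M f g"
proof -
  obtain x where x: "regular_point x"
    using ex_regular_point by blast
  then have "0 < fcond M f 0 x" "0 \<le> g 0 x (x 0)" "x \<in> space (tgs_space d M)"
    using d_pos g_diag_nonneg by (auto simp: regular_point_def)
  then have "0 < ereal (fcond M f 0 x) / ereal (g 0 x (x 0))"
    by (cases "g 0 x (x 0) = 0") (auto simp: ereal_less_divide_pos)
  also have "\<dots> \<le> bconst d M f g"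
    using fcond_divide_g_le_bconst d_pos x by (simp add: regular_point_def)
  finally show ?thesis .
qed

lemma bconst_cases:
  obtains (finite) B where "bconst d M f g = ereal B" "0 < B" | (infinite) "bconst d M f g = \<infinity>"
  using bconst_pos by (cases "bconst d M f g") auto

lemma inverse_bconst_le_pratio:
  assumes x: "regular_point x" and i: "i < d" and B: "bconst d M f g = ereal B"
  shows "1 / B \<le> pratio M f g i x"
proof -
  have x_space: "x \<in> space (tgs_space d M)" and fcond_pos: "0 < fcond M f i x"
    using x i by (auto simp: regular_point_def)
  have ratio: "ereal (fcond M f i x) / ereal (g i x (x i)) \<le> ereal B"
    using fcond_divide_g_le_bconst[OF i x_space] B by simp
  \<comment> \<open>A zero proposal density at a point of positive conditional density would make b infinite.\<close>
  then have "g i x (x i) \<noteq> 0"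
    using fcond_pos by auto
  then have g_pos: "0 < g i x (x i)"
    using g_diag_nonneg[OF i x_space] by simp
  with ratio have "fcond M f i x \<le> B * g i x (x i)"
    by (simp add: divide_le_eq)
  moreover have "0 < B"
    using B bconst_pos by simp
  ultimately show ?thesis
    using fcond_pos g_pos unfolding pratio_def by (simp add: divide_le_eq le_divide_eq mult.commute)
qed

lemma inverse_bconst_le_Zfun:
  assumes x: "regular_point x" and B: "bconst d M f g = ereal B"
  shows "1 / B \<le> Zfun d M f g x"
proof -
  have "real d * (1 / B) \<le> (\<Sum>i<d. pratio M f g i x)"
    using sum_mono[of "{..<d}" "\<lambda>_. 1 / B"] inverse_bconst_le_pratio[OF x _ B] by simp
  then show ?thesis
    unfolding Zfun_def using d_pos by (simp add: le_divide_eq mult.commute)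
qed

lemma Zfun_pos:
  assumes "regular_point x" "bconst d M f g = ereal B"
  shows "0 < Zfun d M f g x"
proof -
  have "0 < 1 / B"
    using assms(2) bconst_pos by simp
  with inverse_bconst_le_Zfun[OF assms] show ?thesis
    by linarith
qed

lemma wfun_le_bconst:
  assumes "regular_point x" "bconst d M f g = ereal B"
  shows "wfun d M f g x \<le> B"
  using inverse_bconst_le_Zfun[OF assms] Zfun_pos[OF assms] assms(2) bconst_pos
  by (simp add: wfun_def divide_le_eq mult.commute)

lemma AE_wfun_le_bconst:
  assumes "bconst d M f g = ereal B"
  shows "AE x in target d M f. wfun d M f g x \<le> B"
  using AE_regular_point by eventually_elim (rule wfun_le_bconst[OF _ assms])

lemma nn_integral_square_mult_wfun_le:
  assumes B: "bconst d M f g = ereal B" and u [measurable]: "u \<in> borel_measurable (target d M f)"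
  shows "(\<integral>\<^sup>+ x. ennreal ((u x)\<^sup>2 * wfun d M f g x) \<partial>target d M f)
    \<le> ennreal B * (\<integral>\<^sup>+ x. ennreal ((u x)\<^sup>2) \<partial>target d M f)"
proof -
  have "AE x in target d M f. ennreal ((u x)\<^sup>2 * wfun d M f g x) \<le> ennreal B * ennreal ((u x)\<^sup>2)"
    using AE_wfun_le_bconst[OF B]
  proof eventually_elim
    case (elim x)
    then have "(u x)\<^sup>2 * wfun d M f g x \<le> B * (u x)\<^sup>2"
      using mult_right_mono[OF elim, of "(u x)\<^sup>2"] by (simp add: mult.commute)
    then show ?case
      using B bconst_pos by (simp add: ennreal_mult[symmetric] ennreal_leI)
  qed
  then show ?thesis
    by (subst nn_integral_cmult[symmetric]) (auto intro: nn_integral_mono_AE)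
qed

lemma var_SIS_le:
  assumes h: "integrable (target d M f) h"
  shows "var_SIS d M f g h \<le> bconst d M f g * var_f d M f h"
proof -
  interpret T: prob_space "target d M f"
    by (rule prob_space_target)
  define c where "c = (\<integral> y. h y \<partial>target d M f)"
  define V where "V = (\<integral>\<^sup>+ x. ennreal ((h x - c)\<^sup>2) \<partial>target d M f)"
  have [measurable]: "h \<in> borel_measurable (target d M f)"
    using h by (rule borel_measurable_integrable)
  have [measurable]: "wfun d M f g \<in> borel_measurable (target d M f)"
    by (simp add: target_def)
  have var_f_eq: "var_f d M f h = enn2ereal V"
    using T.nn_integral_variance[OF h] by (simp add: var_f_def V_def c_def)
  have var_SIS_eq: "var_SIS d M f g h
      = enn2ereal (\<integral>\<^sup>+ x. ennreal ((h x - c)\<^sup>2 * wfun d M f g x) \<partial>target d M f)"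
    by (simp add: var_SIS_def c_def)
  show ?thesis
  proof (cases rule: bconst_cases)
    case (finite B)
    then have "(\<integral>\<^sup>+ x. ennreal ((h x - c)\<^sup>2 * wfun d M f g x) \<partial>target d M f) \<le> ennreal B * V"
      unfolding V_def by (intro nn_integral_square_mult_wfun_le) simp_all
    then show ?thesis
      using finite by (simp add: var_SIS_eq var_f_eq less_eq_ennreal.rep_eq times_ennreal.rep_eq)
  next
    case infinite
    show ?thesis
    proof (cases "V = 0")
      case True
      then have "AE x in target d M f. (h x - c)\<^sup>2 = 0"
        unfolding V_def by (subst (asm) nn_integral_0_iff_AE) simp_all
      then have "(\<integral>\<^sup>+ x. ennreal ((h x - c)\<^sup>2 * wfun d M f g x) \<partial>target d M f) = 0"
        by (subst nn_integral_0_iff_AE) (auto elim: AE_mp)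
      with True show ?thesis
        by (simp add: var_SIS_eq var_f_eq zero_ennreal.rep_eq)
    next
      case False
      then have "0 < enn2ereal V"
        by (metis enn2ereal_nonneg order_le_less zero_ennreal.rep_eq enn2ereal_inject)
      with infinite show ?thesis
        by (auto simp: var_f_eq)
    qed
  qed
qed

lemma Zfun_mult_wfun:
  assumes "regular_point x" "bconst d M f g = ereal B"
  shows "Zfun d M f g x * wfun d M f g x = 1"
  using Zfun_pos[OF assms] by (simp add: wfun_def)

lemma AE_f_mult_Zfun_mult_wfun:
  assumes B: "bconst d M f g = ereal B"
  shows "AE x in tgs_space d M. f x * Zfun d M f g x * wfun d M f g x = f x"
  using AE_space AE_pos_imp_regular_point
proof eventually_elim
  case (elim x)
  then show ?case
    using f_nonneg[of x] Zfun_mult_wfun[OF _ B]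
    by (cases "0 < f x") (simp_all add: mult.assoc)
qed

lemma integral_wfun_tgs_dist:
  assumes B: "bconst d M f g = ereal B"
  shows "(\<integral> x. wfun d M f g x \<partial>tgs_dist d M f g) = 1"
proof -
  have "(\<integral> x. wfun d M f g x \<partial>tgs_dist d M f g)
      = (\<integral> x. (f x * Zfun d M f g x) *\<^sub>R wfun d M f g x \<partial>tgs_space d M)"
    unfolding tgs_dist_def
    by (rule integral_density) (auto intro!: AE_I2 simp: f_nonneg Zfun_nonneg)
  also have "\<dots> = (\<integral> x. f x \<partial>tgs_space d M)"
    using AE_f_mult_Zfun_mult_wfun[OF B] by (intro integral_cong_AE) auto
  also have "\<dots> = enn2real (\<integral>\<^sup>+ x. ennreal (f x) \<partial>tgs_space d M)"
    by (rule integral_eq_nn_integral) (auto intro: AE_I2 f_nonneg)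
  finally show ?thesis
    using f_prob by simp
qed

lemma AE_f_deviation_le:
  assumes B: "bconst d M f g = ereal B"
  shows "AE x in tgs_space d M.
    ennreal (f x * Zfun d M f g x * (wfun d M f g x - 1)\<^sup>2) + 2 * ennreal (f x)
      \<le> ennreal B * ennreal (f x) + ennreal (f x * Zfun d M f g x)"
  using AE_space AE_pos_imp_regular_point
proof eventually_elim
  case (elim x)
  let ?Z = "Zfun d M f g x" and ?w = "wfun d M f g x"
  show ?case
  proof (cases "0 < f x")
    case True
    with elim have x: "regular_point x" by simp
    have "ennreal (f x * ?Z * (?w - 1)\<^sup>2) + 2 * ennreal (f x) = ennreal (f x * ?Z * (?w - 1)\<^sup>2 + 2 * f x)"
      using True Zfun_pos[OF x B] by (simp add: ennreal_mult ennreal_plus)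
    also have "\<dots> \<le> ennreal (B * f x + f x * ?Z)"
      using True Zfun_mult_wfun[OF x B] wfun_le_bconst[OF x B]
      by (intro ennreal_leI weighted_deviation_le) simp_all
    also have "\<dots> = ennreal B * ennreal (f x) + ennreal (f x * ?Z)"
      using True B bconst_pos Zfun_pos[OF x B] by (simp add: ennreal_mult ennreal_plus)
    finally show ?thesis .
  qed (use f_nonneg[of x] elim in simp)
qed

lemma nn_integral_wfun_deviation_le:
  assumes B: "bconst d M f g = ereal B"
  shows "(\<integral>\<^sup>+ x. ennreal ((wfun d M f g x - 1)\<^sup>2) \<partial>tgs_dist d M f g) + 2 \<le> ennreal (B + 1)"
proof -
  let ?Z = "Zfun d M f g" and ?w = "wfun d M f g"
  have B_pos: "0 < B"
    using B bconst_pos by simp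
  have "(\<integral>\<^sup>+ x. ennreal ((?w x - 1)\<^sup>2) \<partial>tgs_dist d M f g) + 2
      = (\<integral>\<^sup>+ x. ennreal (f x * ?Z x * (?w x - 1)\<^sup>2) \<partial>tgs_space d M)
        + 2 * (\<integral>\<^sup>+ x. ennreal (f x) \<partial>tgs_space d M)"
    unfolding tgs_dist_def f_prob
    by (subst nn_integral_density)
      (auto intro!: nn_integral_cong simp: f_nonneg Zfun_nonneg ennreal_mult[symmetric])
  also have "\<dots> = (\<integral>\<^sup>+ x. ennreal (f x * ?Z x * (?w x - 1)\<^sup>2) + 2 * ennreal (f x) \<partial>tgs_space d M)"
    by (subst nn_integral_add) (auto simp: nn_integral_cmult)
  also have "\<dots> \<le> (\<integral>\<^sup>+ x. ennreal B * ennreal (f x) + ennreal (f x * ?Z x) \<partial>tgs_space d M)"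
    by (rule nn_integral_mono_AE[OF AE_f_deviation_le[OF B]])
  also have "\<dots> = ennreal B * (\<integral>\<^sup>+ x. ennreal (f x) \<partial>tgs_space d M)
      + (\<integral>\<^sup>+ x. ennreal (f x * ?Z x) \<partial>tgs_space d M)"
    by (subst nn_integral_add) (auto simp: nn_integral_cmult)
  also have "\<dots> \<le> ennreal B + 1"
    using nn_integral_f_mult_Zfun_le_1 by (simp add: f_prob add_left_mono)
  also have "\<dots> = ennreal (B + 1)"
    using B_pos by simp
  finally show ?thesis .
qed

lemma var_W_le: "var_W d M f g \<le> bconst d M f g - 1"
proof (cases rule: bconst_cases)
  case (finite B)
  define X where "X = (\<integral>\<^sup>+ x. ennreal ((wfun d M f g x - 1)\<^sup>2) \<partial>tgs_dist d M f g)"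
  have X_le: "X + 2 \<le> ennreal (B + 1)"
    unfolding X_def by (rule nn_integral_wfun_deviation_le[OF finite(1)])
  then have "X \<noteq> \<top>"
    by (auto simp: top_unique)
  then obtain r where r: "X = ennreal r" "0 \<le> r"
    by (cases X rule: ennreal_cases) auto
  with X_le have "ennreal (r + 2) \<le> ennreal (B + 1)"
    by simp
  with finite(2) have "r \<le> B - 1"
    using ennreal_le_iff[of "B + 1" "r + 2"] by simp
  then show ?thesis
    using r finite(1) by (simp add: var_W_def integral_wfun_tgs_dist X_def[symmetric] one_ereal_def)
qed simp

end

theorem proposition2:
  fixes d :: nat and M :: "nat \<Rightarrow> 'a measure"
    and f :: "(nat \<Rightarrow> 'a) \<Rightarrow> real"
    and g :: "nat \<Rightarrow> (nat \<Rightarrow> 'a) \<Rightarrow> 'a \<Rightarrow> real"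
    and h :: "(nat \<Rightarrow> 'a) \<Rightarrow> real"
  assumes d_pos: "d \<ge> 1"
    and sf: "\<And>i. i < d \<Longrightarrow> sigma_finite_measure (M i)"
    and f_meas: "f \<in> borel_measurable (tgs_space d M)"
    and f_nonneg: "\<And>x. x \<in> space (tgs_space d M) \<Longrightarrow> 0 \<le> f x"
    and f_prob: "(\<integral>\<^sup>+ x. ennreal (f x) \<partial>(tgs_space d M)) = 1"
    and g_meas: "\<And>i x. i < d \<Longrightarrow> x \<in> space (tgs_space d M) \<Longrightarrow> g i x \<in> borel_measurable (M i)"
    and g_nonneg: "\<And>i x t. i < d \<Longrightarrow> x \<in> space (tgs_space d M) \<Longrightarrow> t \<in> space (M i) \<Longrightarrow> 0 \<le> g i x t"
    and g_prob: "\<And>i x. i < d \<Longrightarrow> x \<in> space (tgs_space d M) \<Longrightarrow> (\<integral>\<^sup>+ t. ennreal (g i x t) \<partial>(M i)) = 1"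
    and g_dep: "\<And>i x s. i < d \<Longrightarrow> x \<in> space (tgs_space d M) \<Longrightarrow> s \<in> space (M i) \<Longrightarrow>
                 g i (x(i := s)) = g i x"
    and g_joint_meas: "\<And>i. i < d \<Longrightarrow> (\<lambda>x. g i x (x i)) \<in> borel_measurable (tgs_space d M)"
    and g_abs_cont: "\<And>i x. i < d \<Longrightarrow> x \<in> space (tgs_space d M) \<Longrightarrow>
                 0 < marg M f i x \<Longrightarrow> marg M f i x < \<infinity> \<Longrightarrow>
                 (AE t in M i. fcond M f i (x(i := t)) = 0 \<longrightarrow> g i x t = 0)"
    and h_meas: "h \<in> borel_measurable (tgs_space d M)"
    and h_int: "integrable (target d M f) h"
  shows "var_W d M f g \<le> bconst d M f g - 1
         \<and> var_SIS d M f g h \<le> bconst d M f g * var_f d M f h"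
proof -
  interpret tgs_setting d M f g
    by (rule tgs_setting.intro)
      (fact d_pos sf f_meas f_nonneg f_prob g_meas g_nonneg g_prob g_dep g_joint_meas)+
  show ?thesis
    using var_W_le var_SIS_le[OF h_int] by simp
qed

end
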